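(* Let $R$ be a ranking profile over $m\geq4$ candidates, let $\rhd$ be the ranking chosen by the Ranked Method of Equal Shares for $R$, and let $\xi=\binom{m-\lfloor m/4\rfloor}{2}$. Then for every subprofile $S$ of $R$ with $|S|>0$: if $\binom{m}{2}|S|-\frac12\leq\xi$, then $\frac{1}{|S|}\sum_{\succ\in\mathcal{R}}S(\succ)u(\succ,\rhd)\geq\binom{m}{2}\frac{|S|}{4}-\frac18$; and if $\binom{m}{2}|S|-\frac12>\xi$, then $$\frac{1}{|S|}\sum_{\succ\in\mathcal{R}}S(\succ)u(\succ,\rhd)\geq\frac12\binom{m}{2}\Big(1-\frac{\xi}{\binom{m}{2}|S|}\Big)+\frac{\xi+1}{4}\cdot\frac{\xi}{\binom{m}{2}|S|}-\frac{1}{4|S|}.$$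
   Context: Let $C$ be a set of $m$ candidates. A ranking is a strict linear order over $C$; $\mathcal{R}$ denotes the set of all rankings over $C$. A ranking profile is a function $R:\mathcal{R}\to[0,1]$ with $\sum_{\succ}R(\succ)=1$. A subprofile of $R$ is $S:\mathcal{R}\to[0,1]$ with $S(\succ)\leq R(\succ)$ for all $\succ$; $|S|=\sum_\succ S(\succ)$. For rankings $\succ,\rhd$, $u(\succ,\rhd)=|\{(x,y)\in C^2:x\succ y\text{ and }x\rhd y\}|$; for $x\in X\subseteq C$, $u(\succ,x,X)=|\{y\in X\setminus\{x\}:x\succ y\}|$. Ranked Method of Equal Shares: set $X_1=C$, $b_1(\succ)=R(\succ)\binom{m}{2}$. In each round $i\in\{1,\dots,m-2\}$, for each $x\in X_i$ let $\rho_x$ be the smallest $\rho\geq0$ with $\sum_{\succ}\min\big(\rho\,b_1(\succ)u(\succ,x,X_i),b_i(\succ),u(\succ,x,X_i)\big)=m-i$ ($\infty$ if none); choose $x_i$ minimizing $\rho_x$ (ties arbitrary), set $\rho_i=\rho_{x_i}$, place $x_i$ at position $i$, set $X_{i+1}=X_i\setminus\{x_i\}$, $b_{i+1}(\succ)=b_i(\succ)-\min(\rho_ib_1(\succ)u(\succ,x_i,X_i),b_i(\succ),u(\succ,x_i,X_i))$. For the last two candidates $x,y$, place $x$ at position $m-1$ if $\sum_{\succ:x\succ y}b_{m-1}(\succ)\geq\sum_{\succ:y\succ x}b_{m-1}(\succ)$, otherwise $y$. *)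

theory Defs
  imports Complex_Main "HOL-Library.Extended_Real"
begin

text \<open>Rankings over a finite candidate set C are the lists enumerating C without
repetition; the first element is the most preferred candidate.\<close>

definition rankings :: "'a set \<Rightarrow> 'a list set" where
  "rankings C = {xs. distinct xs \<and> set xs = C}"

definition prefers :: "'a list \<Rightarrow> 'a \<Rightarrow> 'a \<Rightarrow> bool" where
  "prefers r x y \<longleftrightarrow> (\<exists>i j. i < j \<and> j < length r \<and> r ! i = x \<and> r ! j = y)"

definition agree :: "'a set \<Rightarrow> 'a list \<Rightarrow> 'a list \<Rightarrow> nat" where
  "agree C r s = card {(x, y) \<in> C \<times> C. prefers r x y \<and> prefers s x y}"

definition uX :: "'a list \<Rightarrow> 'a \<Rightarrow> 'a set \<Rightarrow> nat" where
  "uX r x X = card {y \<in> X - {x}. prefers r x y}"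

definition total_pay :: "'a set \<Rightarrow> ('a list \<Rightarrow> real) \<Rightarrow> ('a list \<Rightarrow> real) \<Rightarrow> 'a set \<Rightarrow> 'a \<Rightarrow> real \<Rightarrow> real" where
  "total_pay C b1 b X x \<rho> =
     (\<Sum>r\<in>rankings C. min (\<rho> * b1 r * real (uX r x X)) (min (b r) (real (uX r x X))))"

definition rho :: "'a set \<Rightarrow> ('a list \<Rightarrow> real) \<Rightarrow> ('a list \<Rightarrow> real) \<Rightarrow> 'a set \<Rightarrow> nat \<Rightarrow> 'a \<Rightarrow> ereal" where
  "rho C b1 b X i x =
     (if \<exists>\<rho>::real. \<rho> \<ge> 0 \<and> total_pay C b1 b X x \<rho> = real (card C) - real i
      then ereal (LEAST \<rho>::real. \<rho> \<ge> 0 \<and> total_pay C b1 b X x \<rho> = real (card C) - real i)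
      else \<infinity>)"

definition payment :: "('a list \<Rightarrow> real) \<Rightarrow> ('a list \<Rightarrow> real) \<Rightarrow> 'a set \<Rightarrow> 'a \<Rightarrow> ereal \<Rightarrow> 'a list \<Rightarrow> real" where
  "payment b1 b X x \<rho> r =
     real_of_ereal (min (\<rho> * ereal (b1 r * real (uX r x X))) (ereal (min (b r) (real (uX r x X)))))"

text \<open>rmes_outcome C R rhd: rhd is a ranking that the Ranked Method of Equal Shares can
output on profile R (for some resolution of ties). Position i (1-based) is rhd ! (i - 1).\<close>
definition rmes_outcome :: "'a set \<Rightarrow> ('a list \<Rightarrow> real) \<Rightarrow> 'a list \<Rightarrow> bool" where
  "rmes_outcome C R rhd \<longleftrightarrow>
     rhd \<in> rankings C \<and>
     (\<exists>b :: nat \<Rightarrow> 'a list \<Rightarrow> real.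
        b 1 = (\<lambda>r. R r * real (card C choose 2)) \<and>
        (\<forall>i \<in> {1..card C - 2}.
           (let X = C - set (take (i - 1) rhd); x = rhd ! (i - 1) in
              (\<forall>y\<in>X. rho C (b 1) (b i) X i x \<le> rho C (b 1) (b i) X i y) \<and>
              (\<forall>r\<in>rankings C. b (Suc i) r =
                  b i r - payment (b 1) (b i) X x (rho C (b 1) (b i) X i x) r))) \<and>
        (let x = rhd ! (card C - 2); y = rhd ! (card C - 1) in
           (\<Sum>r\<in>{r\<in>rankings C. prefers r x y}. b (card C - 1) r) \<ge>
           (\<Sum>r\<in>{r\<in>rankings C. prefers r y x}. b (card C - 1) r)))"

end

theory Submission
  imports Defs "HOL-Analysis.Analysis"
begin

(*
  The coalition S owns the fraction S r / R r of the budget of every voter type r.  In round i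
  it spends P\<^sub>i, and since a payment is at most \<rho>\<^sub>i b\<^sub>1 r u(r, x\<^sub>i, X\<^sub>i), its utility
  U\<^sub>i from that round satisfies P\<^sub>i \<le> \<rho>\<^sub>i M U\<^sub>i, where M = m choose 2.

  Both bounds on \<rho>\<^sub>i come from one averaging argument: at a price below \<rho>\<^sub>i no remaining
  candidate is affordable, and summing the payments over the k remaining candidates, which
  every voter ranks with u-values 0, ..., k - 1, shows that the voters could not even pay
  min(\<rho> b\<^sub>1 (k - 1), b\<^sub>i) for their first choices.  While i \<le> m div 4 the budgets are
  still large, which forces \<rho>\<^sub>i \<le> 2 / M and hence U\<^sub>i \<ge> P\<^sub>i / 2; afterwards
  \<rho>\<^sub>i B\<^sub>i \<le> 2 for the coalition's remaining budget B\<^sub>i, hence U\<^sub>i \<ge> P\<^sub>i B\<^sub>i / (2 M).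
  The same argument shows that every round is affordable, so the total budget shrinks
  exactly to (m + 1 - i) choose 2.

  Telescoping B\<^sub>i\<^sub>+\<^sub>1 = B\<^sub>i - P\<^sub>i, and treating the last three candidates separately, gives
  \<Sum>\<^sub>r S r u(r, \<rhd>) \<ge> (M s - z) / 2 + (z\<^sup>2 - 1/4) / (4 M) with z = B at round m div 4 + 1,
  where z \<le> \<xi>; both claimed bounds follow because the right-hand side decreases in z.
*)

section \<open>Rankings\<close>

lemma finite_rankings: "finite C \<Longrightarrow> finite (rankings C)"
  unfolding rankings_def by (rule finite_subset[OF _ finite_subset_distinct]) auto

lemma real_choose_two: "real (n choose 2) = real n * (real n - 1) / 2"
  by (induction n) (auto simp: numeral_2_eq_2 field_simps)

lemma sum_lessThan_id_choose_two: "(\<Sum>j<n. j) = n choose 2"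
  by (induction n) (auto simp: numeral_2_eq_2)

lemma prefers_trans:
  assumes "distinct r" "prefers r x y" "prefers r y z"
  shows "prefers r x z"
proof -
  obtain i j where "i < j" "j < length r" "r ! i = x" "r ! j = y"
    using assms(2) unfolding prefers_def by blast
  moreover obtain j' k where "j' < k" "k < length r" "r ! j' = y" "r ! k = z"
    using assms(3) unfolding prefers_def by blast
  ultimately have "j = j'" using assms(1) nth_eq_iff_index_eq by fastforce
  then have "i < k" using \<open>i < j\<close> \<open>j' < k\<close> by simp
  then show ?thesis
    unfolding prefers_def using \<open>k < length r\<close> \<open>r ! i = x\<close> \<open>r ! k = z\<close> by blast
qed

lemma prefers_asym:
  assumes "distinct r" "prefers r x y"
  shows "\<not> prefers r y x"
proof
  assume "prefers r y x"
  then have "prefers r x x" using prefers_trans[OF assms] by blast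
  then show False using assms(1) unfolding prefers_def by (auto simp: nth_eq_iff_index_eq)
qed

lemma prefers_total:
  assumes "x \<in> set r" "y \<in> set r" "x \<noteq> y"
  shows "prefers r x y \<or> prefers r y x"
  using assms unfolding prefers_def in_set_conv_nth by (metis linorder_neqE_nat)

lemma prefers_nth_iff:
  assumes "distinct s" "i < length s"
  shows "prefers s (s ! i) y \<longleftrightarrow> y \<in> set (drop (Suc i) s)"
proof
  assume "prefers s (s ! i) y"
  then obtain i' j where "i' < j" "j < length s" "s ! i' = s ! i" "s ! j = y"
    unfolding prefers_def by blast
  moreover have "i' = i" using calculation assms nth_eq_iff_index_eq by fastforce
  ultimately show "y \<in> set (drop (Suc i) s)"
    unfolding in_set_conv_nth by (intro exI[of _ "j - Suc i"]) auto
next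
  assume "y \<in> set (drop (Suc i) s)"
  then obtain j where "j < length s - Suc i" "s ! (Suc i + j) = y"
    unfolding in_set_conv_nth by auto
  then show "prefers s (s ! i) y"
    unfolding prefers_def by (intro exI[of _ i] exI[of _ "Suc i + j"]) auto
qed

lemma uX_le:
  assumes "finite X" "x \<in> X"
  shows "uX r x X \<le> card X - 1"
proof -
  have "uX r x X \<le> card (X - {x})" unfolding uX_def by (rule card_mono) (use \<open>finite X\<close> in auto)
  then show ?thesis using \<open>finite X\<close> \<open>x \<in> X\<close> by simp
qed

lemma uX_less_if_prefers:
  assumes r: "distinct r" and X: "finite X" "y \<in> X" and xy: "prefers r x y"
  shows "uX r y X < uX r x X"
  unfolding uX_def
proof (rule psubset_card_mono)
  have "x \<noteq> y" using prefers_asym[OF r xy] xy by blast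
  have "z \<in> X - {x} \<and> prefers r x z" if "z \<in> X - {y}" "prefers r y z" for z
    using that prefers_trans[OF r xy] prefers_asym[OF r xy] by auto
  moreover have "y \<in> {z \<in> X - {x}. prefers r x z}" using X(2) xy \<open>x \<noteq> y\<close> by simp
  ultimately show "{z \<in> X - {y}. prefers r y z} \<subset> {z \<in> X - {x}. prefers r x z}" by blast
qed (use X in simp)

lemma bij_betw_uX:
  assumes r: "distinct r" and X: "X \<subseteq> set r" "finite X"
  shows "bij_betw (\<lambda>x. uX r x X) X {..<card X}"
proof -
  have inj: "inj_on (\<lambda>x. uX r x X) X"
  proof (rule inj_onI, rule ccontr)
    fix x y assume xy: "x \<in> X" "y \<in> X" "uX r x X = uX r y X" "x \<noteq> y"
    then have "prefers r x y \<or> prefers r y x" using prefers_total[of x r y] X(1) by blast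
    then show False
    proof
      assume "prefers r x y"
      from uX_less_if_prefers[OF r X(2) xy(2) this] xy(3) show False by simp
    next
      assume "prefers r y x"
      from uX_less_if_prefers[OF r X(2) xy(1) this] xy(3) show False by simp
    qed
  qed
  have "uX r x X < card X" if "x \<in> X" for x
  proof -
    have "0 < card X" using X(2) that by (auto simp: card_gt_0_iff)
    then show ?thesis using uX_le[OF X(2) that, of r] by linarith
  qed
  then have "(\<lambda>x. uX r x X) ` X \<subseteq> {..<card X}" by auto
  moreover have "card ((\<lambda>x. uX r x X) ` X) = card {..<card X}"
    using card_image[OF inj] by simp
  ultimately have "(\<lambda>x. uX r x X) ` X = {..<card X}"
    by (rule card_subset_eq[OF finite_lessThan])
  then show ?thesis unfolding bij_betw_def using inj by blast
qed

lemma sum_uX: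
  assumes "distinct r" "X \<subseteq> set r" "finite X"
  shows "(\<Sum>x\<in>X. uX r x X) = card X choose 2"
proof -
  have "(\<Sum>x\<in>X. uX r x X) = (\<Sum>j<card X. j)"
    using sum.reindex_bij_betw[OF bij_betw_uX[OF assms], of "\<lambda>j. j"] by simp
  then show ?thesis by (simp only: sum_lessThan_id_choose_two)
qed

lemma uX_top:
  assumes "distinct r" "X \<subseteq> set r" "finite X" "X \<noteq> {}"
  shows "\<exists>t\<in>X. uX r t X = card X - 1"
proof -
  have "card X - 1 \<in> {..<card X}" using assms(3,4) by (simp add: card_gt_0_iff)
  then have "card X - 1 \<in> (\<lambda>x. uX r x X) ` X"
    using bij_betw_imp_surj_on[OF bij_betw_uX[OF assms(1-3)]] by simp
  then obtain t where t: "t \<in> X" "card X - 1 = uX r t X" by blast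
  show ?thesis using t by (intro bexI[of _ t]) simp_all
qed

lemma set_drop_Suc_nth:
  assumes "distinct s" "i < length s"
  shows "set (drop (Suc i) s) = set (drop i s) - {s ! i}"
proof -
  have "distinct (s ! i # drop (Suc i) s)"
    using distinct_drop[OF assms(1), of i] by (simp add: Cons_nth_drop_Suc[OF assms(2)])
  then show ?thesis by (auto simp: Cons_nth_drop_Suc[OF assms(2), symmetric])
qed

lemma set_drop_eq_Diff_take:
  assumes "distinct s"
  shows "set (drop i s) = set s - set (take i s)"
proof -
  have "set s = set (take i s) \<union> set (drop i s)"
    using set_append[of "take i s" "drop i s"] by simp
  moreover have "set (take i s) \<inter> set (drop i s) = {}"
    using set_take_disj_set_drop_if_distinct[OF assms order.refl] .
  ultimately show ?thesis by blast
qed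

lemma drop_two_before_end:
  assumes "2 \<le> length xs"
  shows "drop (length xs - 2) xs = [xs ! (length xs - 2), xs ! (length xs - 1)]"
proof -
  have "length xs - 2 < length xs" "Suc (length xs - 2) < length xs" using assms by auto
  moreover have "Suc (Suc (length xs - 2)) = length xs" "Suc (length xs - 2) = length xs - 1"
    using assms by auto
  ultimately show ?thesis
    by (metis Cons_nth_drop_Suc drop_all order.refl)
qed

lemma agree_eq_sum_uX:
  assumes r: "r \<in> rankings C" and s: "s \<in> rankings C"
  shows "agree C r s = (\<Sum>i<card C. uX r (s ! i) (set (drop i s)))"
proof -
  have s': "distinct s" "set s = C" "length s = card C"
    using s by (auto simp: rankings_def distinct_card)
  define g where "g x = card {y\<in>C. prefers r x y \<and> prefers s x y}" for x
  have "{(x, y) \<in> C \<times> C. prefers r x y \<and> prefers s x y} = (SIGMA x:C. {y\<in>C. prefers r x y \<and> prefers s x y})"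
    by auto
  then have "agree C r s = (\<Sum>x\<in>C. g x)"
    unfolding agree_def g_def using List.finite_set[of s] s'(2) by simp
  also have "\<dots> = (\<Sum>i<card C. g (s ! i))"
    using sum.reindex_bij_betw[OF bij_betw_nth[OF s'(1) refl refl], of g] by (simp add: s'(2,3))
  also have "\<dots> = (\<Sum>i<card C. uX r (s ! i) (set (drop i s)))"
  proof (rule sum.cong[OF refl])
    fix i assume "i \<in> {..<card C}"
    then have "prefers s (s ! i) y \<longleftrightarrow> y \<in> set (drop i s) - {s ! i}" for y
      using prefers_nth_iff[OF s'(1)] set_drop_Suc_nth[OF s'(1)] s'(3) by simp
    moreover have "set (drop i s) \<subseteq> C" using set_drop_subset s'(2) by metis
    ultimately have "{y\<in>C. prefers r (s ! i) y \<and> prefers s (s ! i) y}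
        = {y \<in> set (drop i s) - {s ! i}. prefers r (s ! i) y}"
      by blast
    then show "g (s ! i) = uX r (s ! i) (set (drop i s))"
      unfolding g_def uX_def by simp
  qed
  finally show ?thesis .
qed

section \<open>Prices and payments\<close>

lemma continuous_on_total_pay: "continuous_on UNIV (total_pay C b1 b X x)"
  unfolding total_pay_def by (intro continuous_intros)

lemma total_pay_zero:
  assumes "\<forall>r\<in>rankings C. 0 \<le> b r"
  shows "total_pay C b1 b X x 0 = 0"
  unfolding total_pay_def using assms by (intro sum.neutral) auto

lemma Least_level_set_continuous:
  fixes f :: "real \<Rightarrow> real"
  assumes f: "continuous_on UNIV f" and \<rho>: "0 \<le> \<rho>" "f \<rho> = c"
  defines "\<rho>0 \<equiv> LEAST \<rho>. 0 \<le> \<rho> \<and> f \<rho> = c"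
  shows "0 \<le> \<rho>0" "f \<rho>0 = c" "\<rho>0 \<le> \<rho>"
proof -
  define A where "A = {\<rho>. 0 \<le> \<rho> \<and> f \<rho> = c}"
  have "closed A"
    unfolding A_def by (intro closed_Collect_conj closed_Collect_le closed_Collect_eq f continuous_intros)
  moreover have "A \<noteq> {}" "bdd_below A" using \<rho> unfolding A_def by (auto intro: bdd_belowI[of _ 0])
  ultimately have "Inf A \<in> A" by (intro closed_contains_Inf)
  moreover have "Inf A \<le> \<rho>'" if "\<rho>' \<in> A" for \<rho>'
    using that \<open>bdd_below A\<close> by (rule cInf_lower)
  ultimately have "\<rho>0 = Inf A"
    unfolding \<rho>0_def A_def by (intro Least_equality) auto
  then show "0 \<le> \<rho>0" "f \<rho>0 = c" "\<rho>0 \<le> \<rho>"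
    using \<open>Inf A \<in> A\<close> \<open>\<And>\<rho>'. \<rho>' \<in> A \<Longrightarrow> Inf A \<le> \<rho>'\<close>[of \<rho>] \<rho> unfolding A_def by auto
qed

lemma rho_nonneg: "0 \<le> rho C b1 b X i x"
  unfolding rho_def
  using Least_level_set_continuous(1)[OF continuous_on_total_pay] by auto

lemma rho_eq_ereal:
  assumes "rho C b1 b X i x = ereal \<rho>"
  shows "0 \<le> \<rho>" "total_pay C b1 b X x \<rho> = real (card C) - real i"
  using assms Least_level_set_continuous(1,2)[OF continuous_on_total_pay]
  unfolding rho_def by (auto split: if_splits)

lemma rho_le_if_total_pay_ge:
  assumes b: "\<forall>r\<in>rankings C. 0 \<le> b r" and i: "real i < real (card C)"
    and \<rho>: "0 \<le> \<rho>" "real (card C) - real i \<le> total_pay C b1 b X x \<rho>"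
  shows "rho C b1 b X i x \<le> ereal \<rho>"
proof -
  have "\<exists>\<rho>'\<ge>0. \<rho>' \<le> \<rho> \<and> total_pay C b1 b X x \<rho>' = real (card C) - real i"
    using continuous_on_total_pay[of C b1 b X x] total_pay_zero[OF b] i \<rho>
    by (intro IVT) (auto simp: continuous_on_eq_continuous_at)
  then obtain \<rho>' where \<rho>': "0 \<le> \<rho>'" "\<rho>' \<le> \<rho>" "total_pay C b1 b X x \<rho>' = real (card C) - real i"
    by blast
  then show ?thesis
    unfolding rho_def using Least_level_set_continuous(3)[OF continuous_on_total_pay \<rho>'(1,3)]
    by auto
qed

lemma total_pay_less_if_less_rho:
  assumes "\<forall>r\<in>rankings C. 0 \<le> b r" "real i < real (card C)" "0 \<le> \<rho>"
    and "ereal \<rho> < rho C b1 b X i x"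
  shows "total_pay C b1 b X x \<rho> < real (card C) - real i"
  using rho_le_if_total_pay_ge[OF assms(1-3)] assms(4) by (meson linorder_not_le)

lemma payment_ereal:
  "payment b1 b X x (ereal \<rho>) r = min (\<rho> * b1 r * real (uX r x X)) (min (b r) (real (uX r x X)))"
  unfolding payment_def by (simp add: mult.assoc min_def)

lemma payment_bounds:
  assumes "0 \<le> b1 r" "0 \<le> b r" "0 \<le> \<rho>"
  shows "0 \<le> payment b1 b X x \<rho> r" "payment b1 b X x \<rho> r \<le> b r"
    "payment b1 b X x \<rho> r \<le> real (uX r x X)"
proof -
  have "0 \<le> payment b1 b X x \<rho> r \<and> payment b1 b X x \<rho> r \<le> min (b r) (real (uX r x X))"
  proof (cases \<rho>)
    case (real \<rho>')
    then show ?thesis using assms by (auto simp: payment_ereal)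
  next
    case PInf
    then show ?thesis
      using assms by (cases "b1 r * real (uX r x X) = 0") (auto simp: payment_def min_def)
  qed (use assms in simp)
  then show "0 \<le> payment b1 b X x \<rho> r" "payment b1 b X x \<rho> r \<le> b r"
    "payment b1 b X x \<rho> r \<le> real (uX r x X)" by auto
qed

lemma sum_payment_eq_total_pay:
  "(\<Sum>r\<in>rankings C. payment b1 b X x (ereal \<rho>) r) = total_pay C b1 b X x \<rho>"
  unfolding total_pay_def payment_ereal ..

lemma total_pay_one:
  assumes "\<forall>r\<in>rankings C. 0 \<le> b r \<and> b r \<le> b1 r"
  shows "total_pay C b1 b X x 1 = (\<Sum>r\<in>rankings C. min (b r) (real (uX r x X)))"
  unfolding total_pay_def
proof (rule sum.cong[OF refl])
  fix r assume r: "r \<in> rankings C"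
  show "min (1 * b1 r * real (uX r x X)) (min (b r) (real (uX r x X))) = min (b r) (real (uX r x X))"
  proof (cases "uX r x X = 0")
    case False
    then have "b r \<le> b1 r * real (uX r x X)"
      using assms r mult_left_mono[of 1 "real (uX r x X)" "b1 r"] by fastforce
    then show ?thesis by simp
  qed (use assms r in simp)
qed

section \<open>Affordability\<close>

lemma scaled_min_le_min:
  fixes a c j K :: real
  assumes "0 \<le> a" "0 \<le> c" "0 \<le> j" "j \<le> K" "0 < K" "min (a * K) c \<le> K"
  shows "j / K * min (a * K) c \<le> min (a * j) (min c j)"
proof -
  define t where "t = min (a * K) c"
  have l: "0 \<le> j / K" "j / K \<le> 1" using assms by auto
  have "j / K * t \<le> j / K * (a * K)" using l unfolding t_def by (intro mult_left_mono) auto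
  also have "\<dots> = a * j" using assms(5) by simp
  finally have "j / K * t \<le> a * j" .
  moreover have "j / K * t \<le> c"
    using l assms(1,2,5) mult_left_le_one_le[of t "j / K"] unfolding t_def by force
  moreover have "j / K * t \<le> j / K * K" using l assms(6) unfolding t_def by (intro mult_left_mono) auto
  ultimately show ?thesis using assms(5) unfolding t_def by simp
qed

lemma sum_uX_payments_ge:
  assumes r: "distinct r" "X \<subseteq> set r" "finite X" and k: "card X = k" "2 \<le> k"
    and a: "0 \<le> a" and c: "0 \<le> c" and t: "min (a * (real k - 1)) c \<le> real k - 1"
  shows "real k / 2 * min (a * (real k - 1)) c
           \<le> (\<Sum>x\<in>X. min (a * real (uX r x X)) (min c (real (uX r x X))))"
proof -
  define t where "t = min (a * (real k - 1)) c"
  have "real (uX r x X) \<le> real k - 1" if "x \<in> X" for x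
    using uX_le[OF r(3) that, of r] k by linarith
  then have "(\<Sum>x\<in>X. real (uX r x X) / (real k - 1) * t)
      \<le> (\<Sum>x\<in>X. min (a * real (uX r x X)) (min c (real (uX r x X))))"
    using a c t k(2) unfolding t_def by (intro sum_mono scaled_min_le_min) auto
  moreover have "(\<Sum>x\<in>X. real (uX r x X) / (real k - 1) * t) = real k / 2 * t"
  proof -
    define U where "U = (\<Sum>x\<in>X. real (uX r x X))"
    have U: "U = real k * (real k - 1) / 2"
      unfolding U_def using arg_cong[OF sum_uX[OF r], of real] k by (simp add: real_choose_two)
    have "(\<Sum>x\<in>X. real (uX r x X) / (real k - 1) * t) = U * (t / (real k - 1))"
      unfolding U_def sum_distrib_right by simp
    also have "\<dots> = real k / 2 * t" unfolding U using k(2) by (simp add: field_simps)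
    finally show ?thesis .
  qed
  ultimately show ?thesis unfolding t_def by simp
qed

text \<open>Each voter ranks some candidate of X on top (u = k - 1); as it is unaffordable, what she
  would pay for it is below k - 1.  Payments are concave in u, so her payments to all of X add
  up to at least k / 2 times that amount, while the payments to X total less than k (k - 1).\<close>

lemma weighted_top_payments_less:
  assumes C: "finite C" "X \<subseteq> C" and k: "card X = k" "2 \<le> k"
    and b: "\<forall>r\<in>rankings C. 0 \<le> b1 r \<and> 0 \<le> b r" and \<sigma>: "\<forall>r\<in>rankings C. 0 \<le> \<sigma> r \<and> \<sigma> r \<le> 1"
    and \<rho>: "0 \<le> \<rho>" and unaffordable: "\<forall>x\<in>X. total_pay C b1 b X x \<rho> < real k - 1"
  shows "(\<Sum>r\<in>rankings C. \<sigma> r * min (\<rho> * b1 r * (real k - 1)) (b r)) < 2 * (real k - 1)"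
proof -
  define t where "t r = min (\<rho> * b1 r * (real k - 1)) (b r)" for r
  define pay where "pay r x = min (\<rho> * b1 r * real (uX r x X)) (min (b r) (real (uX r x X)))" for r x
  have finX: "finite X" "X \<noteq> {}" using C k finite_subset by auto
  have ranking: "distinct r" "X \<subseteq> set r" if "r \<in> rankings C" for r
    using that C(2) by (auto simp: rankings_def)
  have pay_nonneg: "0 \<le> pay r x" if "r \<in> rankings C" for r x
    using b \<rho> that unfolding pay_def by simp
  have total_pay: "total_pay C b1 b X x \<rho> = (\<Sum>r\<in>rankings C. pay r x)" for x
    unfolding total_pay_def pay_def ..
  have t_less: "t r < real k - 1" if r: "r \<in> rankings C" for r
  proof -
    obtain x where x: "x \<in> X" "uX r x X = k - 1" using uX_top[OF ranking[OF r] finX] k by blast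
    have "pay r x \<le> total_pay C b1 b X x \<rho>"
      unfolding total_pay using finite_rankings[OF C(1)] pay_nonneg r by (intro member_le_sum) auto
    moreover have "pay r x = min (t r) (real k - 1)"
      unfolding pay_def t_def using x k by (simp add: min.assoc)
    ultimately show ?thesis using unaffordable x(1) by (auto simp: min_def split: if_splits)
  qed
  have "(\<Sum>r\<in>rankings C. real k / 2 * t r) \<le> (\<Sum>r\<in>rankings C. \<Sum>x\<in>X. pay r x)"
    unfolding t_def pay_def mult.assoc[symmetric]
    using b \<rho> less_imp_le[OF t_less] k ranking finX(1)
    by (intro sum_mono sum_uX_payments_ge) (auto simp: t_def)
  also have "\<dots> = (\<Sum>x\<in>X. total_pay C b1 b X x \<rho>)" unfolding total_pay by (rule sum.swap)
  also have "\<dots> < (\<Sum>x\<in>X. real k - 1)" using finX unaffordable by (intro sum_strict_mono) auto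
  also have "\<dots> = real k / 2 * (2 * (real k - 1))" using k(1) by simp
  finally have "real k / 2 * (\<Sum>r\<in>rankings C. t r) < real k / 2 * (2 * (real k - 1))"
    by (simp only: sum_distrib_left)
  then have "(\<Sum>r\<in>rankings C. t r) < 2 * (real k - 1)" using k(2) by simp
  moreover have "(\<Sum>r\<in>rankings C. \<sigma> r * t r) \<le> (\<Sum>r\<in>rankings C. t r)"
    using \<sigma> b \<rho> k(2) unfolding t_def by (intro sum_mono mult_left_le_one_le) auto
  ultimately show ?thesis unfolding t_def by linarith
qed

lemma sum_min_one_eq_sum:
  fixes g :: "'v \<Rightarrow> real"
  assumes "finite A" "\<forall>v\<in>A. 0 \<le> g v" "(\<Sum>v\<in>A. min (g v) 1) < 1"
  shows "(\<Sum>v\<in>A. min (g v) 1) = (\<Sum>v\<in>A. g v)"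
proof (rule sum.cong[OF refl])
  fix v assume "v \<in> A"
  then have "min (g v) 1 \<le> (\<Sum>v\<in>A. min (g v) 1)"
    using assms(1,2) by (intro member_le_sum) auto
  then show "min (g v) 1 = g v" using assms(3) by (simp add: min_def split: if_splits)
qed

lemma bij_betw_lessThan_three_obtain:
  assumes "bij_betw f X {..<3::nat}"
  obtains x y z where "x \<in> X" "y \<in> X" "z \<in> X" "f x = 0" "f y = 1" "f z = 2"
proof -
  have "{0, 1, 2} \<subseteq> f ` X" using bij_betw_imp_surj_on[OF assms] by auto
  then show ?thesis using that by (auto simp: image_iff)
qed

lemma three_candidates_affordable_small_budgets:
  fixes u :: "'v \<Rightarrow> 'c \<Rightarrow> nat" and b :: "'v \<Rightarrow> real"
  assumes V: "finite V" and X: "card X = 3" and u: "\<And>v. v \<in> V \<Longrightarrow> bij_betw (u v) X {..<3}"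
    and b: "\<forall>v\<in>V. 0 \<le> b v \<and> b v \<le> 1" and total: "(\<Sum>v\<in>V. b v) = 3"
  shows "\<exists>x\<in>X. 2 \<le> (\<Sum>v\<in>V. min (b v) (real (u v x)))"
proof (rule ccontr)
  assume "\<not> ?thesis"
  then have "(\<Sum>x\<in>X. \<Sum>v\<in>V. min (b v) (real (u v x))) < (\<Sum>x\<in>X. 2)"
    using X by (intro sum_strict_mono) (auto simp: card_ge_0_finite)
  moreover have "(\<Sum>x\<in>X. min (b v) (real (u v x))) = 2 * b v" if v: "v \<in> V" for v
  proof -
    have "(\<Sum>x\<in>X. min (b v) (real (u v x))) = (\<Sum>j<3. min (b v) (real j))"
      using sum.reindex_bij_betw[OF u[OF v], of "\<lambda>j. min (b v) (real j)"] by simp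
    moreover have "0 \<le> b v" "b v \<le> 1" using b v by auto
    ultimately show ?thesis by (simp add: numeral_3_eq_3)
  qed
  then have "(\<Sum>v\<in>V. \<Sum>x\<in>X. min (b v) (real (u v x))) = 2 * (\<Sum>v\<in>V. b v)"
    by (simp add: sum_distrib_left)
  moreover have "(\<Sum>x\<in>X. \<Sum>v\<in>V. min (b v) (real (u v x))) = (\<Sum>v\<in>V. \<Sum>x\<in>X. min (b v) (real (u v x)))"
    by (rule sum.swap)
  ultimately show False using X total by simp
qed

lemma sum_min_ge_remove_subset:
  fixes g :: "'v \<Rightarrow> real"
  assumes "finite V" "v0 \<in> V" "W \<subseteq> V - {v0}" "\<forall>v\<in>V. 0 \<le> b v \<and> 0 \<le> g v"
    "\<forall>v\<in>W. 1 \<le> g v"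
  shows "min (b v0) (g v0) + (\<Sum>v\<in>W. min (b v) 1) \<le> (\<Sum>v\<in>V. min (b v) (g v))"
proof -
  have "(\<Sum>v\<in>W. min (b v) 1) \<le> (\<Sum>v\<in>W. min (b v) (g v))"
    using assms(5) by (intro sum_mono min.mono) auto
  also have "\<dots> \<le> (\<Sum>v\<in>V - {v0}. min (b v) (g v))"
    using assms(1,3,4) by (intro sum_mono2) auto
  finally show ?thesis using sum.remove[OF assms(1,2), of "\<lambda>v. min (b v) (g v)"] by simp
qed

text \<open>Let \<tau> and y be the first and second choice of a voter v0 with budget above 1.  Voters not
  ranking \<tau> last contribute to \<tau>, the others to y; if neither collected 2, the budgets
  would add up to less than 3.\<close>

lemma three_candidates_affordable_large_budget:
  fixes u :: "'v \<Rightarrow> 'c \<Rightarrow> nat" and b :: "'v \<Rightarrow> real"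
  assumes V: "finite V" and u: "\<And>v. v \<in> V \<Longrightarrow> bij_betw (u v) X {..<3}"
    and b: "\<forall>v\<in>V. 0 \<le> b v" and total: "(\<Sum>v\<in>V. b v) = 3" and v0: "v0 \<in> V" "1 < b v0"
  shows "\<exists>x\<in>X. 2 \<le> (\<Sum>v\<in>V. min (b v) (real (u v x)))"
proof (rule ccontr)
  define f where "f x = (\<Sum>v\<in>V. min (b v) (real (u v x)))" for x
  assume "\<not> ?thesis"
  then have f_less: "f x < 2" if "x \<in> X" for x using that unfolding f_def by auto
  obtain y \<tau> where \<tau>: "\<tau> \<in> X" "u v0 \<tau> = 2" and y: "y \<in> X" "u v0 y = 1"
    using bij_betw_lessThan_three_obtain[OF u[OF v0(1)]] by metis
  define A where "A = {v \<in> V - {v0}. 1 \<le> u v \<tau>}"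
  define B where "B = {v \<in> V - {v0}. u v \<tau> = 0}"
  have AB: "finite A" "finite B" "A \<inter> B = {}" "A \<union> B = V - {v0}"
    using V unfolding A_def B_def by auto
  have "min (b v0) 2 + (\<Sum>v\<in>A. min (b v) 1) \<le> f \<tau>"
    unfolding f_def using sum_min_ge_remove_subset[OF V v0(1), of A b "\<lambda>v. real (u v \<tau>)"] b \<tau>(2)
    by (auto simp: A_def)
  moreover have "0 \<le> (\<Sum>v\<in>A. min (b v) 1)" using b unfolding A_def by (intro sum_nonneg) auto
  ultimately have A_small: "b v0 + (\<Sum>v\<in>A. min (b v) 1) < 2"
    using f_less[OF \<tau>(1)] by (auto simp: min_def split: if_splits)
  have "1 \<le> real (u v y)" if v: "v \<in> B" for v
  proof -
    have "inj_on (u v) X" using bij_betw_imp_inj_on[OF u] v unfolding B_def by blast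
    moreover have "y \<noteq> \<tau>" using \<tau>(2) y(2) by auto
    ultimately have "u v y \<noteq> u v \<tau>" using \<tau>(1) y(1) by (meson inj_onD)
    then show ?thesis using v unfolding B_def by simp
  qed
  then have "min (b v0) 1 + (\<Sum>v\<in>B. min (b v) 1) \<le> f y"
    unfolding f_def using sum_min_ge_remove_subset[OF V v0(1), of B b "\<lambda>v. real (u v y)"] b y(2)
    by (auto simp: B_def)
  then have B_small: "(\<Sum>v\<in>B. min (b v) 1) < 1" using f_less[OF y(1)] v0(2) by simp
  have "(\<Sum>v\<in>A. b v) + (\<Sum>v\<in>B. b v) < 3 - b v0"
    using A_small B_small v0(2) sum_min_one_eq_sum[OF AB(1), of b] sum_min_one_eq_sum[OF AB(2), of b] b
    unfolding A_def B_def by auto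
  moreover have "(\<Sum>v\<in>A. b v) + (\<Sum>v\<in>B. b v) = 3 - b v0"
    using total V v0(1) AB by (simp add: sum.union_disjoint[symmetric] sum_diff1)
  ultimately show False by simp
qed

lemma three_candidates_affordable:
  fixes u :: "'v \<Rightarrow> 'c \<Rightarrow> nat" and b :: "'v \<Rightarrow> real"
  assumes V: "finite V" and X: "card X = 3" and u: "\<And>v. v \<in> V \<Longrightarrow> bij_betw (u v) X {..<3}"
    and b: "\<forall>v\<in>V. 0 \<le> b v" and total: "(\<Sum>v\<in>V. b v) = 3"
  shows "\<exists>x\<in>X. 2 \<le> (\<Sum>v\<in>V. min (b v) (real (u v x)))"
proof (cases "\<exists>v\<in>V. 1 < b v")
  case True
  then obtain v0 where "v0 \<in> V" "1 < b v0" by blast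
  from three_candidates_affordable_large_budget[OF V u b total this] show ?thesis .
next
  case False
  then have "\<forall>v\<in>V. 0 \<le> b v \<and> b v \<le> 1" using b by (auto simp: not_less)
  from three_candidates_affordable_small_budgets[OF V X u this total] show ?thesis .
qed

section \<open>Real inequalities\<close>

lemma card_le_twice_choose_two_three_quarters:
  assumes "4 \<le> m"
  shows "real (m choose 2) \<le> 2 * real ((m - m div 4) choose 2)"
proof -
  define n where "n = real (m - m div 4)"
  have n: "3 * real m / 4 \<le> n" unfolding n_def by (simp add: of_nat_diff)
  have "real m * (real m - 1) / 2 \<le> (3 * real m / 4) * (3 * real m / 4 - 1)"
    using assms by (simp add: field_simps)
  also have "\<dots> \<le> n * (n - 1)" using n assms by (intro mult_mono) auto
  finally show ?thesis unfolding n_def by (simp add: real_choose_two)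
qed

lemma choose_two_three_quarters_le:
  assumes "4 \<le> m"
  shows "real ((m - m div 4) choose 2) + 1 / 4 \<le> real (m choose 2)"
proof -
  define n where "n = real (m - m div 4)"
  have n: "3 \<le> n" "n \<le> real m - 1" unfolding n_def using assms by simp_all
  have "n * (n - 1) \<le> (real m - 1) * (real m - 2)" using n by (intro mult_mono) auto
  moreover have "(real m - 1) * (real m - 2) = real m * (real m - 1) - 2 * (real m - 1)"
    by (simp add: algebra_simps)
  moreover have "real ((m - m div 4) choose 2) = n * (n - 1) / 2"
    unfolding n_def by (rule real_choose_two)
  ultimately show ?thesis using assms by (simp add: real_choose_two)
qed

lemma sum_mult_ge_half_diff_squares:
  fixes B P :: "nat \<Rightarrow> real"
  assumes step: "\<And>i. a \<le> i \<Longrightarrow> i \<le> n \<Longrightarrow> B (Suc i) = B i - P i" and "a \<le> Suc n"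
  shows "(B a ^ 2 - B (Suc n) ^ 2) / 2 \<le> (\<Sum>i = a..n. P i * B i)"
proof -
  have "B a ^ 2 - B (Suc n) ^ 2 = (\<Sum>i = a..n. B i ^ 2 - B (Suc i) ^ 2)"
    using sum_Suc_diff[OF assms(2), of "\<lambda>i. - (B i ^ 2)"] by simp
  also have "\<dots> \<le> (\<Sum>i = a..n. 2 * P i * B i)"
  proof (rule sum_mono)
    fix i assume "i \<in> {a..n}"
    then have "B (Suc i) = B i - P i" using step by simp
    then have "B i ^ 2 - B (Suc i) ^ 2 = 2 * P i * B i - P i ^ 2"
      by (simp only:) (simp add: power2_eq_square algebra_simps)
    then show "B i ^ 2 - B (Suc i) ^ 2 \<le> 2 * P i * B i" by simp
  qed
  also have "\<dots> = 2 * (\<Sum>i = a..n. P i * B i)" by (simp add: sum_distrib_left mult.assoc)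
  finally show ?thesis by simp
qed

lemma square_bound_if_linear_bound:
  fixes w V M :: real
  assumes "0 < M" "0 \<le> V" "0 \<le> w" "w \<le> 3" "w - 1 / 2 \<le> M * V"
  shows "(w ^ 2 - 1 / 4) / (4 * M) \<le> V"
proof -
  have "w ^ 2 - 1 / 4 \<le> 4 * (M * V)"
  proof (cases "w \<le> 1 / 2")
    case True
    then have "w ^ 2 \<le> (1 / 2) ^ 2" using assms(3) by (intro power_mono) auto
    then have "w ^ 2 \<le> 1 / 4" by (simp add: power2_eq_square)
    moreover have "0 \<le> M * V" using assms(1,2) by simp
    ultimately show ?thesis by linarith
  next
    case False
    have "w ^ 2 - 1 / 4 = (w - 1 / 2) * (w + 1 / 2)" by (simp add: power2_eq_square algebra_simps)
    also have "\<dots> \<le> (w - 1 / 2) * 4" using False assms(4) by (intro mult_left_mono) auto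
    finally show ?thesis using assms(5) by simp
  qed
  then show ?thesis using assms(1) by (simp add: field_simps)
qed

lemma quadratic_bound_antimono:
  fixes M y a c :: real
  assumes "0 < M" "0 \<le> a" "a \<le> c" "c \<le> M"
  shows "(y - c) / 2 + (c ^ 2 - 1 / 4) / (4 * M) \<le> (y - a) / 2 + (a ^ 2 - 1 / 4) / (4 * M)"
proof -
  have "((y - a) / 2 + (a ^ 2 - 1 / 4) / (4 * M)) - ((y - c) / 2 + (c ^ 2 - 1 / 4) / (4 * M))
      = (c - a) * (2 * M - c - a) / (4 * M)"
    using assms(1) by (simp add: field_simps power2_eq_square)
  moreover have "0 \<le> (c - a) * (2 * M - c - a) / (4 * M)"
    using assms by (intro divide_nonneg_pos mult_nonneg_nonneg) auto
  ultimately show ?thesis by linarith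
qed

lemma average_bound_small:
  fixes M s U z :: real
  assumes M: "0 < M" and s: "0 < s" "s \<le> 1" and U: "0 \<le> U"
    and z: "0 \<le> z" "z \<le> M * s" and bound: "(M * s - z) / 2 + (z ^ 2 - 1 / 4) / (4 * M) \<le> U"
  shows "M * s / 4 - 1 / 8 \<le> 1 / s * U"
proof (cases "1 / 2 \<le> M * s")
  case True
  have "(M * s) ^ 2 / (4 * M) - M * s / (8 * M) \<le> ((M * s) ^ 2 - 1 / 4) / (4 * M)"
    using True M by (simp add: field_simps)
  also have "\<dots> \<le> U"
    using quadratic_bound_antimono[OF M z(1,2), of "M * s"] bound M s by simp
  finally have "1 / s * ((M * s) ^ 2 / (4 * M) - M * s / (8 * M)) \<le> 1 / s * U"
    using s by (intro mult_left_mono) auto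
  moreover have "1 / s * ((M * s) ^ 2 / (4 * M) - M * s / (8 * M)) = M * s / 4 - 1 / 8"
    using M s by (simp add: field_simps power2_eq_square)
  ultimately show ?thesis by simp
next
  case False
  then have "M * s / 4 - 1 / 8 < 0" by simp
  moreover have "0 \<le> 1 / s * U" using s U by simp
  ultimately show ?thesis by linarith
qed

lemma average_bound_large:
  fixes M s U z \<xi> :: real
  assumes M: "0 < M" and s: "0 < s" and z: "0 \<le> z" "z \<le> \<xi>" and \<xi>: "\<xi> + 1 / 4 \<le> M"
    and bound: "(M * s - z) / 2 + (z ^ 2 - 1 / 4) / (4 * M) \<le> U"
  shows "1 / 2 * M * (1 - \<xi> / (M * s)) + (\<xi> + 1) / 4 * (\<xi> / (M * s)) - 1 / (4 * s) \<le> 1 / s * U"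
proof -
  have "(\<xi> + 1) * \<xi> / (4 * M) - 1 / 4 - (\<xi> ^ 2 - 1 / 4) / (4 * M) = (\<xi> + 1 / 4 - M) / (4 * M)"
    using M by (simp add: field_simps power2_eq_square)
  moreover have "(\<xi> + 1 / 4 - M) / (4 * M) \<le> 0" using \<xi> M by (intro divide_nonpos_pos) auto
  ultimately have "(M * s - \<xi>) / 2 + (\<xi> + 1) * \<xi> / (4 * M) - 1 / 4
      \<le> (M * s - \<xi>) / 2 + (\<xi> ^ 2 - 1 / 4) / (4 * M)"
    by linarith
  also have "\<dots> \<le> U"
    using quadratic_bound_antimono[OF M z, of "M * s"] \<xi> bound by simp
  finally have "1 / s * ((M * s - \<xi>) / 2 + (\<xi> + 1) * \<xi> / (4 * M) - 1 / 4) \<le> 1 / s * U"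
    using s by (intro mult_left_mono) auto
  moreover have "1 / s * ((M * s - \<xi>) / 2 + (\<xi> + 1) * \<xi> / (4 * M) - 1 / 4)
      = 1 / 2 * M * (1 - \<xi> / (M * s)) + (\<xi> + 1) / 4 * (\<xi> / (M * s)) - 1 / (4 * s)"
    using M s by (simp add: field_simps)
  ultimately show ?thesis by simp
qed

section \<open>A run of the method\<close>

text \<open>The assumptions of rmes_run unfold rmes_outcome C R rhd for a fixed choice of the budgets b.\<close>

locale rmes_run =
  fixes C :: "'a set" and R :: "'a list \<Rightarrow> real" and rhd :: "'a list"
    and b :: "nat \<Rightarrow> 'a list \<Rightarrow> real"
  assumes finite_C: "finite C" and four_le_card: "4 \<le> card C"
    and R_nonneg: "\<forall>r\<in>rankings C. 0 \<le> R r"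
    and R_sum: "(\<Sum>r\<in>rankings C. R r) = 1"
    and rhd_ranking: "rhd \<in> rankings C"
    and b_1: "b 1 = (\<lambda>r. R r * real (card C choose 2))"
    and rounds: "\<forall>i \<in> {1..card C - 2}.
           (let X = C - set (take (i - 1) rhd); x = rhd ! (i - 1) in
              (\<forall>y\<in>X. rho C (b 1) (b i) X i x \<le> rho C (b 1) (b i) X i y) \<and>
              (\<forall>r\<in>rankings C. b (Suc i) r =
                  b i r - payment (b 1) (b i) X x (rho C (b 1) (b i) X i x) r))"
    and last_pair: "let x = rhd ! (card C - 2); y = rhd ! (card C - 1) in
           (\<Sum>r\<in>{r\<in>rankings C. prefers r x y}. b (card C - 1) r) \<ge>
           (\<Sum>r\<in>{r\<in>rankings C. prefers r y x}. b (card C - 1) r)"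
begin

abbreviation "m \<equiv> card C"

abbreviation "M \<equiv> real (card C choose 2)"

definition remaining :: "nat \<Rightarrow> 'a set" where
  "remaining i = C - set (take (i - 1) rhd)"

definition chosen :: "nat \<Rightarrow> 'a" where
  "chosen i = rhd ! (i - 1)"

definition eprice :: "nat \<Rightarrow> ereal" where
  "eprice i = rho C (b 1) (b i) (remaining i) i (chosen i)"

text \<open>price i is meaningful only once eprice_eq_price shows that eprice i is finite.\<close>

definition price :: "nat \<Rightarrow> real" where
  "price i = real_of_ereal (eprice i)"

definition pay :: "nat \<Rightarrow> 'a list \<Rightarrow> real" where
  "pay i = payment (b 1) (b i) (remaining i) (chosen i) (eprice i)"

definition total_budget :: "nat \<Rightarrow> real" where
  "total_budget i = (\<Sum>r\<in>rankings C. b i r)"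

lemma finite_rankings_C: "finite (rankings C)"
  using finite_rankings[OF finite_C] .

lemma rhd_props: "distinct rhd" "set rhd = C" "length rhd = m"
  using rhd_ranking by (auto simp: rankings_def distinct_card)

lemma rankingsD: "r \<in> rankings C \<Longrightarrow> distinct r \<and> set r = C"
  by (simp add: rankings_def)

lemma M_pos: "0 < M"
  using four_le_card by (simp add: real_choose_two)

lemma remaining_eq_set_drop: "remaining i = set (drop (i - 1) rhd)"
  unfolding remaining_def using set_drop_eq_Diff_take[OF rhd_props(1)] rhd_props(2) by simp

lemma remaining_subset: "remaining i \<subseteq> C"
  unfolding remaining_def by auto

lemma card_remaining: "1 \<le> i \<Longrightarrow> card (remaining i) = m + 1 - i"
  unfolding remaining_eq_set_drop using rhd_props distinct_card[OF distinct_drop[OF rhd_props(1)]] by simp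

lemma chosen_in_remaining:
  assumes "1 \<le> i" "i \<le> m"
  shows "chosen i \<in> remaining i"
proof -
  have "i - 1 < length rhd" using rhd_props(3) assms by simp
  then show ?thesis
    unfolding remaining_eq_set_drop chosen_def by (simp flip: Cons_nth_drop_Suc)
qed

lemma b1_nonneg: "r \<in> rankings C \<Longrightarrow> 0 \<le> b 1 r"
  using R_nonneg M_pos b_1 by simp

lemma eprice_le_rho:
  assumes "1 \<le> i" "i \<le> m - 2" "y \<in> remaining i"
  shows "eprice i \<le> rho C (b 1) (b i) (remaining i) i y"
  using rounds assms unfolding eprice_def remaining_def chosen_def Let_def by auto

lemma b_Suc:
  assumes "1 \<le> i" "i \<le> m - 2" "r \<in> rankings C"
  shows "b (Suc i) r = b i r - pay i r"
  using rounds assms unfolding pay_def eprice_def remaining_def chosen_def Let_def by auto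

lemma eprice_nonneg: "0 \<le> eprice i"
  unfolding eprice_def by (rule rho_nonneg)

lemma pay_bounds_if_b_nonneg:
  assumes "r \<in> rankings C" "0 \<le> b i r"
  shows "0 \<le> pay i r" "pay i r \<le> b i r" "pay i r \<le> real (uX r (chosen i) (remaining i))"
  unfolding pay_def
  using payment_bounds[of "b 1" r "b i" "eprice i" "remaining i" "chosen i",
      OF b1_nonneg[OF assms(1)] assms(2) eprice_nonneg]
  by auto

lemma b_bounds:
  assumes "1 \<le> i" "i \<le> m - 1" "r \<in> rankings C"
  shows "0 \<le> b i r" "b i r \<le> b 1 r"
proof -
  have "0 \<le> b i r \<and> b i r \<le> b 1 r" using assms(1,2)
  proof (induction i rule: nat_induct_at_least)
    case base
    show ?case using b1_nonneg[OF assms(3)] by simp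
  next
    case (Suc i)
    then have "0 \<le> b i r" "b i r \<le> b 1 r" by auto
    then show ?case
      using b_Suc[of i r] pay_bounds_if_b_nonneg[OF assms(3), of i] Suc.prems Suc.hyps assms(3) by simp
  qed
  then show "0 \<le> b i r" "b i r \<le> b 1 r" by auto
qed

lemma pay_bounds:
  assumes "1 \<le> i" "i \<le> m - 2" "r \<in> rankings C"
  shows "0 \<le> pay i r" "pay i r \<le> b i r" "pay i r \<le> real (uX r (chosen i) (remaining i))"
  using pay_bounds_if_b_nonneg[OF assms(3) b_bounds(1)[OF assms(1) _ assms(3)]] assms(2) by auto

lemma pay_ereal:
  "eprice i = ereal \<rho> \<Longrightarrow>
     pay i r = min (\<rho> * b 1 r * real (uX r (chosen i) (remaining i)))
                   (min (b i r) (real (uX r (chosen i) (remaining i))))"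
  unfolding pay_def by (simp add: payment_ereal)

lemma total_budget_Suc:
  assumes "1 \<le> i" "i \<le> m - 2" "eprice i = ereal \<rho>"
  shows "total_budget (Suc i) = total_budget i - (real m - real i)"
proof -
  have "(\<Sum>r\<in>rankings C. pay i r) = real m - real i"
    using rho_eq_ereal(2)[OF assms(3)[unfolded eprice_def]] sum_payment_eq_total_pay
    unfolding pay_def assms(3) by metis
  then show ?thesis
    unfolding total_budget_def using b_Suc[OF assms(1,2)] by (simp add: sum_subtractf)
qed

lemma top_payments_less_if_below_eprice:
  assumes i: "1 \<le> i" "i \<le> m - 2" and \<sigma>: "\<forall>r\<in>rankings C. 0 \<le> \<sigma> r \<and> \<sigma> r \<le> 1"
    and \<rho>: "0 \<le> \<rho>" "ereal \<rho> < eprice i"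
  shows "(\<Sum>r\<in>rankings C. \<sigma> r * min (\<rho> * b 1 r * real (m - i)) (b i r)) < 2 * real (m - i)"
proof -
  have k: "card (remaining i) = m + 1 - i" "2 \<le> m + 1 - i" "real (m + 1 - i) - 1 = real (m - i)"
    using card_remaining[OF i(1)] i by (auto simp: of_nat_diff)
  have b: "\<forall>r\<in>rankings C. 0 \<le> b 1 r \<and> 0 \<le> b i r"
    using b1_nonneg b_bounds(1)[OF i(1)] i(2) by auto
  have "total_pay C (b 1) (b i) (remaining i) y \<rho> < real (m + 1 - i) - 1" if y: "y \<in> remaining i" for y
  proof -
    have "ereal \<rho> < rho C (b 1) (b i) (remaining i) i y"
      using \<rho>(2) eprice_le_rho[OF i y] by simp
    moreover have "real i < real m" using i by simp
    ultimately show ?thesis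
      using total_pay_less_if_less_rho[of C "b i" i \<rho>] b \<rho>(1) k(3) i by (simp add: of_nat_diff)
  qed
  then show ?thesis
    using weighted_top_payments_less[OF finite_C remaining_subset k(1,2) b \<sigma> \<rho>(1)] k(3) by simp
qed

lemma eprice_le_inverse:
  assumes i: "1 \<le> i" "i \<le> m - 3" and total: "total_budget i = real ((m + 1 - i) choose 2)"
  shows "eprice i \<le> ereal (1 / real (m - i))"
proof (rule ccontr)
  assume "\<not> ?thesis"
  then have "(\<Sum>r\<in>rankings C. 1 * min (1 / real (m - i) * b 1 r * real (m - i)) (b i r))
      < 2 * real (m - i)"
    using i by (intro top_payments_less_if_below_eprice) auto
  moreover have "min (1 / real (m - i) * b 1 r * real (m - i)) (b i r) = b i r" if "r \<in> rankings C" for r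
    using b_bounds(2)[OF i(1) _ that] i by simp
  ultimately have "real (m + 1 - i) * real (m - i) / 2 < 2 * real (m - i)"
    using total i unfolding total_budget_def by (simp add: real_choose_two)
  moreover have "4 * real (m - i) \<le> real (m + 1 - i) * real (m - i)"
    using i by (intro mult_right_mono) auto
  ultimately show False by linarith
qed

lemma eprice_le_one_if_three_left:
  assumes total: "total_budget (m - 2) = 3"
  shows "eprice (m - 2) \<le> ereal 1"
proof -
  define X where "X = remaining (m - 2)"
  have i: "1 \<le> m - 2" "m - 2 \<le> m - 2" using four_le_card by auto
  have X: "card X = 3" "finite X"
    unfolding X_def using card_remaining[OF i(1)] four_le_card finite_subset[OF remaining_subset finite_C]
    by auto
  have b: "\<forall>r\<in>rankings C. 0 \<le> b (m - 2) r \<and> b (m - 2) r \<le> b 1 r"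
    using b_bounds[OF i(1)] by auto
  have "bij_betw (\<lambda>x. uX r x X) X {..<3}" if "r \<in> rankings C" for r
    using bij_betw_uX[of r X] rankingsD[OF that] remaining_subset X unfolding X_def by auto
  then obtain x where x: "x \<in> X" "2 \<le> (\<Sum>r\<in>rankings C. min (b (m - 2) r) (real (uX r x X)))"
    using three_candidates_affordable[OF finite_rankings_C X(1), of "\<lambda>r x. uX r x X" "b (m - 2)"]
      b total unfolding total_budget_def by auto
  moreover have "total_pay C (b 1) (b (m - 2)) X x 1
      = (\<Sum>r\<in>rankings C. min (b (m - 2) r) (real (uX r x X)))"
    by (rule total_pay_one[OF b])
  moreover have "real m - real (m - 2) = 2" using four_le_card by (simp add: of_nat_diff)
  ultimately have "real m - real (m - 2) \<le> total_pay C (b 1) (b (m - 2)) X x 1" by linarith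
  then have "rho C (b 1) (b (m - 2)) X (m - 2) x \<le> ereal 1"
    using b four_le_card by (intro rho_le_if_total_pay_ge) auto
  moreover have "eprice (m - 2) \<le> rho C (b 1) (b (m - 2)) X (m - 2) x"
    using eprice_le_rho[OF i] x(1) unfolding X_def by blast
  ultimately show ?thesis by (rule order_trans[rotated])
qed

lemma eprice_eq_price_if_total_budget:
  assumes i: "1 \<le> i" "i \<le> m - 2" and total: "total_budget i = real ((m + 1 - i) choose 2)"
  shows "eprice i = ereal (price i)"
proof -
  have "eprice i \<noteq> \<infinity>"
  proof (cases "i \<le> m - 3")
    case True
    then show ?thesis using eprice_le_inverse[OF i(1) True total] by auto
  next
    case False
    then have "i = m - 2" "m + 1 - i = 3" using i by auto
    moreover have "real (3 choose 2) = 3" by (simp add: real_choose_two)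
    ultimately show ?thesis using eprice_le_one_if_three_left total by auto
  qed
  then show ?thesis unfolding price_def using eprice_nonneg[of i] by (cases "eprice i") auto
qed

lemma total_budget_eq:
  assumes "1 \<le> i" "i \<le> m - 1"
  shows "total_budget i = real ((m + 1 - i) choose 2)"
  using assms
proof (induction i rule: nat_induct_at_least)
  case base
  show ?case using R_sum unfolding total_budget_def b_1 by (simp add: sum_distrib_right[symmetric])
next
  case (Suc i)
  then have i: "1 \<le> i" "i \<le> m - 2" and total: "total_budget i = real ((m + 1 - i) choose 2)"
    by auto
  have "total_budget (Suc i) = real ((m + 1 - i) choose 2) - (real m - real i)"
    using total_budget_Suc[OF i eprice_eq_price_if_total_budget[OF i total]] total by simp
  also have "\<dots> = real ((m + 1 - Suc i) choose 2)"
    using i by (simp add: real_choose_two of_nat_diff field_simps)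
  finally show ?case .
qed

lemma eprice_eq_price: "1 \<le> i \<Longrightarrow> i \<le> m - 2 \<Longrightarrow> eprice i = ereal (price i)"
  using eprice_eq_price_if_total_budget total_budget_eq by simp

lemma price_nonneg: "0 \<le> price i"
  unfolding price_def using eprice_nonneg[of i] by (cases "eprice i") auto

lemma price_le_inverse:
  assumes "1 \<le> i" "i \<le> m - 3"
  shows "price i \<le> 1 / real (m - i)"
  using eprice_le_inverse[OF assms total_budget_eq] eprice_eq_price assms by simp

lemma pay_le_price:
  assumes "1 \<le> i" "i \<le> m - 2"
  shows "pay i r \<le> price i * b 1 r * real (uX r (chosen i) (remaining i))"
  using pay_ereal[OF eprice_eq_price[OF assms]] by simp

lemma top_payments_less_if_below_price:
  assumes i: "1 \<le> i" "i \<le> m - 2" and \<sigma>: "\<forall>r\<in>rankings C. 0 \<le> \<sigma> r \<and> \<sigma> r \<le> 1"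
    and \<rho>: "0 \<le> \<rho>" "\<rho> < price i"
  shows "(\<Sum>r\<in>rankings C. \<sigma> r * min (\<rho> * b 1 r * real (m - i)) (b i r)) < 2 * real (m - i)"
  using top_payments_less_if_below_eprice[OF i \<sigma> \<rho>(1)] \<rho>(2) eprice_eq_price[OF i] by simp

text \<open>At price 2 / B, below price i, every voter could spend the fraction 2 (m - i) / B of her
  weighted budget on her first choice, which the averaging bound excludes.\<close>

lemma price_mult_weighted_budget_le:
  assumes i: "1 \<le> i" "i \<le> m - 3" and \<sigma>: "\<forall>r\<in>rankings C. 0 \<le> \<sigma> r \<and> \<sigma> r \<le> 1"
  shows "price i * (\<Sum>r\<in>rankings C. \<sigma> r * b i r) \<le> 2"
proof (rule ccontr)
  define B where "B = (\<Sum>r\<in>rankings C. \<sigma> r * b i r)"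
  define k where "k = real (m - i)"
  assume "\<not> price i * (\<Sum>r\<in>rankings C. \<sigma> r * b i r) \<le> 2"
  then have more: "2 < price i * B" unfolding B_def by simp
  have k: "3 \<le> k" unfolding k_def using i by simp
  have "0 \<le> B" unfolding B_def using \<sigma> b_bounds(1)[OF i(1)] i by (intro sum_nonneg) auto
  then have B: "0 < B" using more by (cases "B = 0") auto
  have "price i \<le> 1 / k" unfolding k_def by (rule price_le_inverse[OF i])
  then have "k * price i \<le> 1" using k by (simp add: field_simps)
  then have "k * (price i * B) \<le> B" using B mult_right_mono[of "k * price i" 1 B] by simp
  moreover have "k * 2 < k * (price i * B)" using mult_strict_left_mono[OF more, of k] k by simp
  ultimately have "2 * k < B" by linarith
  then have scale: "0 \<le> 2 * k / B" "2 * k / B \<le> 1" using B k by (auto simp: field_simps)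
  have "(\<Sum>r\<in>rankings C. \<sigma> r * min (2 / B * b 1 r * k) (b i r)) < 2 * k"
    unfolding k_def using i \<sigma> B more by (intro top_payments_less_if_below_price) (auto simp: field_simps)
  moreover have "2 * k / B * (\<sigma> r * b i r) \<le> \<sigma> r * min (2 / B * b 1 r * k) (b i r)"
    if r: "r \<in> rankings C" for r
  proof -
    have b: "0 \<le> b i r" "b i r \<le> b 1 r" using b_bounds[OF i(1) _ r] i by auto
    have "2 * k / B * b i r \<le> 2 / B * b 1 r * k"
      using mult_left_mono[OF b(2) scale(1)] by (simp add: field_simps)
    moreover have "2 * k / B * b i r \<le> b i r" using scale b by (intro mult_left_le_one_le)
    ultimately have "2 * k / B * b i r \<le> min (2 / B * b 1 r * k) (b i r)" by simp
    then have "\<sigma> r * (2 * k / B * b i r) \<le> \<sigma> r * min (2 / B * b 1 r * k) (b i r)"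
      using \<sigma> r by (intro mult_left_mono) auto
    then show ?thesis by (simp only: mult.left_commute)
  qed
  then have "2 * k / B * B \<le> (\<Sum>r\<in>rankings C. \<sigma> r * min (2 / B * b 1 r * k) (b i r))"
    unfolding B_def sum_distrib_left by (intro sum_mono)
  ultimately show False using B by simp
qed

lemma uX_chosen_le:
  assumes "1 \<le> i" "i \<le> m"
  shows "real (uX r (chosen i) (remaining i)) \<le> real (m - i)"
proof -
  have "uX r (chosen i) (remaining i) \<le> card (remaining i) - 1"
    using uX_le[OF finite_subset[OF remaining_subset finite_C] chosen_in_remaining[OF assms]] .
  then show ?thesis using card_remaining[OF assms(1)] assms by simp
qed

lemma M_le_early:
  assumes "i \<le> m div 4"
  shows "M \<le> real (m - i) * (real (m - i) - 1)"
proof -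
  have "M \<le> real (m - m div 4) * (real (m - m div 4) - 1)"
    using card_le_twice_choose_two_three_quarters[OF four_le_card] by (simp add: real_choose_two)
  also have "\<dots> \<le> real (m - i) * (real (m - i) - 1)"
    using assms four_le_card by (intro mult_mono) auto
  finally show ?thesis .
qed

lemma price_le_if_budgets_large:
  assumes i: "1 \<le> i" "i \<le> m - 2" and M_le: "M \<le> real (m - i) * (real (m - i) - 1)"
    and large: "\<forall>r\<in>rankings C. R r * ((real (m - i) + 1) * real (m - i) - M) \<le> b i r"
  shows "price i \<le> 2 / M"
proof (rule ccontr)
  define k where "k = real (m - i)"
  assume "\<not> price i \<le> 2 / M"
  then have "(\<Sum>r\<in>rankings C. 1 * min (2 / M * b 1 r * k) (b i r)) < 2 * k"
    unfolding k_def using i M_pos by (intro top_payments_less_if_below_price) auto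
  moreover have "R r * (2 * k) \<le> 1 * min (2 / M * b 1 r * k) (b i r)" if r: "r \<in> rankings C" for r
  proof -
    have "R r * (2 * k) \<le> R r * ((k + 1) * k - M)"
      using M_le R_nonneg r unfolding k_def by (intro mult_left_mono) (auto simp: algebra_simps)
    also have "\<dots> \<le> b i r" using large r unfolding k_def by simp
    finally have "R r * (2 * k) \<le> b i r" .
    moreover have "2 / M * b 1 r * k = R r * (2 * k)" using M_pos unfolding b_1 by simp
    ultimately show ?thesis by simp
  qed
  then have "(\<Sum>r\<in>rankings C. R r) * (2 * k) \<le> (\<Sum>r\<in>rankings C. 1 * min (2 / M * b 1 r * k) (b i r))"
    unfolding sum_distrib_right by (intro sum_mono)
  ultimately show False using R_sum by simp
qed

lemma budgets_large_early:
  assumes "1 \<le> i" "i \<le> m div 4"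
  shows "\<forall>r\<in>rankings C. R r * ((real (m - i) + 1) * real (m - i) - M) \<le> b i r"
  using assms
proof (induction i rule: nat_induct_at_least)
  case base
  have "(real (m - 1) + 1) * real (m - 1) - M = M"
    using four_le_card by (simp add: real_choose_two of_nat_diff)
  then show ?case unfolding b_1 by simp
next
  case (Suc i)
  have i: "1 \<le> i" "i \<le> m - 2" "i \<le> m div 4" using Suc four_le_card by auto
  have price: "price i \<le> 2 / M"
    using price_le_if_budgets_large[OF i(1,2) M_le_early[OF i(3)]] Suc by simp
  show ?case
  proof
    fix r assume r: "r \<in> rankings C"
    have "pay i r \<le> price i * b 1 r * real (uX r (chosen i) (remaining i))"
      by (rule pay_le_price[OF i(1,2)])
    also have "\<dots> \<le> 2 / M * b 1 r * real (m - i)"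
      using price price_nonneg b1_nonneg[OF r] uX_chosen_le[of i r] i
      by (intro mult_mono) auto
    also have "\<dots> = 2 * R r * real (m - i)" using M_pos unfolding b_1 by simp
    finally have "pay i r \<le> 2 * R r * real (m - i)" .
    moreover have "R r * ((real (m - i) + 1) * real (m - i) - M) \<le> b i r" using Suc r by auto
    moreover have "real (m - i) = real (m - Suc i) + 1" using i four_le_card by simp
    ultimately show "R r * ((real (m - Suc i) + 1) * real (m - Suc i) - M) \<le> b (Suc i) r"
      using b_Suc[OF i(1,2) r] by (simp add: algebra_simps)
  qed
qed

lemma price_le_early:
  assumes "1 \<le> i" "i \<le> m div 4"
  shows "price i \<le> 2 / M"
  using assms four_le_card
  by (intro price_le_if_budgets_large M_le_early budgets_large_early) auto

lemma last_pair_minority_budget: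
  "(\<Sum>r\<in>rankings C. if prefers r (rhd ! (m - 1)) (rhd ! (m - 2)) then b (m - 1) r else 0) \<le> 1 / 2"
proof -
  define p where "p = rhd ! (m - 2)"
  define q where "q = rhd ! (m - 1)"
  define majority where "majority = (\<Sum>r\<in>rankings C. if prefers r p q then b (m - 1) r else 0)"
  define minority where "minority = (\<Sum>r\<in>rankings C. if prefers r q p then b (m - 1) r else 0)"
  have pq: "p \<in> C" "q \<in> C" "p \<noteq> q"
    unfolding p_def q_def using rhd_props four_le_card by (auto simp: nth_eq_iff_index_eq)
  have "majority + minority = total_budget (m - 1)"
    unfolding majority_def minority_def total_budget_def sum.distrib[symmetric]
  proof (rule sum.cong[OF refl])
    fix r assume "r \<in> rankings C"
    then have "prefers r p q \<noteq> prefers r q p"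
      using prefers_total[of p r q] prefers_asym[of r p q] pq rankingsD by blast
    then show "(if prefers r p q then b (m - 1) r else 0) + (if prefers r q p then b (m - 1) r else 0)
        = b (m - 1) r" by auto
  qed
  also have "\<dots> = 1" using total_budget_eq[of "m - 1"] four_le_card by simp
  finally have "majority + minority = 1" .
  moreover have "minority \<le> majority"
    using last_pair unfolding majority_def minority_def p_def q_def Let_def sum.inter_filter[OF finite_rankings_C] .
  ultimately show ?thesis unfolding minority_def p_def q_def by simp
qed

lemma agree_rhd_eq:
  assumes r: "r \<in> rankings C"
  shows "real (agree C r rhd) = (\<Sum>i = 1..m - 2. real (uX r (chosen i) (remaining i)))
           + (if prefers r (rhd ! (m - 2)) (rhd ! (m - 1)) then 1 else 0)"
proof -
  define g where "g i = uX r (rhd ! i) (set (drop i rhd))" for i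
  define p where "p = rhd ! (m - 2)"
  define q where "q = rhd ! (m - 1)"
  have m: "m = Suc (Suc (m - 2))" "Suc (m - 2) = m - 1" using four_le_card by auto
  have "p \<noteq> q" unfolding p_def q_def using rhd_props four_le_card by (simp add: nth_eq_iff_index_eq)
  have drop: "drop (m - 2) rhd = [p, q]" "drop (m - 1) rhd = [q]"
    using drop_two_before_end[of rhd] rhd_props(3) four_le_card m(2) unfolding p_def q_def
    by (auto simp flip: Cons_nth_drop_Suc)
  have "g (m - 2) = (if prefers r p q then 1 else 0)"
    unfolding g_def uX_def drop p_def[symmetric] using \<open>p \<noteq> q\<close> by (auto simp: Collect_conv_if)
  moreover have "g (m - 1) = 0" unfolding g_def uX_def drop q_def[symmetric] by simp
  moreover have "agree C r rhd = (\<Sum>i<m - 2. g i) + g (m - 2) + g (m - 1)"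
  proof -
    have "agree C r rhd = (\<Sum>i<Suc (Suc (m - 2)). g i)"
      unfolding agree_eq_sum_uX[OF r rhd_ranking] g_def[symmetric] by (simp only: m(1)[symmetric])
    also have "\<dots> = (\<Sum>i<m - 2. g i) + g (m - 2) + g (Suc (m - 2))"
      by (simp only: sum.lessThan_Suc)
    finally show ?thesis by (simp only: m(2))
  qed
  moreover have "(\<Sum>i<m - 2. g i) = (\<Sum>i = 1..m - 2. uX r (chosen i) (remaining i))"
    unfolding g_def chosen_def remaining_eq_set_drop by (simp add: sum.atLeast1_atMost_eq)
  ultimately show ?thesis unfolding p_def q_def by (simp add: of_nat_sum)
qed

end

section \<open>The coalition\<close>

locale rmes_coalition = rmes_run +
  fixes S :: "'a list \<Rightarrow> real"
  assumes S_bounds: "\<forall>r\<in>rankings C. 0 \<le> S r \<and> S r \<le> R r"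
begin

text \<open>If R r = 0 then also S r = 0, so the junk value S r / 0 = 0 is harmless.\<close>

definition share :: "'a list \<Rightarrow> real" where
  "share r = S r / R r"

definition budget :: "nat \<Rightarrow> real" where
  "budget i = (\<Sum>r\<in>rankings C. share r * b i r)"

definition spent :: "nat \<Rightarrow> real" where
  "spent i = (\<Sum>r\<in>rankings C. share r * pay i r)"

definition utility :: "nat \<Rightarrow> real" where
  "utility i = (\<Sum>r\<in>rankings C. S r * real (uX r (chosen i) (remaining i)))"

definition last_pair_utility :: real where
  "last_pair_utility = (\<Sum>r\<in>rankings C. S r * (if prefers r (rhd ! (m - 2)) (rhd ! (m - 1)) then 1 else 0))"

lemma share_bounds: "r \<in> rankings C \<Longrightarrow> 0 \<le> share r \<and> share r \<le> 1"
  using S_bounds R_nonneg unfolding share_def by (auto simp: divide_le_eq_1)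

lemma share_mult_b1: "r \<in> rankings C \<Longrightarrow> share r * b 1 r = S r * M"
  using S_bounds unfolding share_def b_1 by (cases "R r = 0") auto

lemma budget_1: "budget 1 = M * (\<Sum>r\<in>rankings C. S r)"
proof -
  have "budget 1 = (\<Sum>r\<in>rankings C. S r * M)"
    unfolding budget_def by (rule sum.cong[OF refl]) (rule share_mult_b1)
  then show ?thesis by (simp add: sum_distrib_right mult.commute)
qed

lemma budget_Suc: "1 \<le> i \<Longrightarrow> i \<le> m - 2 \<Longrightarrow> budget (Suc i) = budget i - spent i"
  unfolding budget_def spent_def using b_Suc by (simp add: sum_subtractf[symmetric] right_diff_distrib)

lemma budget_nonneg: "1 \<le> i \<Longrightarrow> i \<le> m - 1 \<Longrightarrow> 0 \<le> budget i"
  unfolding budget_def using share_bounds b_bounds(1) by (intro sum_nonneg) auto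

lemma budget_le_total_budget: "1 \<le> i \<Longrightarrow> i \<le> m - 1 \<Longrightarrow> budget i \<le> total_budget i"
  unfolding budget_def total_budget_def using share_bounds b_bounds(1)
  by (intro sum_mono mult_left_le_one_le) auto

lemma spent_nonneg: "1 \<le> i \<Longrightarrow> i \<le> m - 2 \<Longrightarrow> 0 \<le> spent i"
  unfolding spent_def using share_bounds pay_bounds(1) by (intro sum_nonneg) auto

lemma utility_nonneg: "0 \<le> utility i"
  unfolding utility_def using S_bounds by (intro sum_nonneg) auto

lemma spent_le_price_utility:
  assumes "1 \<le> i" "i \<le> m - 2"
  shows "spent i \<le> price i * M * utility i"
proof -
  have "spent i \<le> (\<Sum>r\<in>rankings C. share r * (price i * b 1 r * real (uX r (chosen i) (remaining i))))"
    unfolding spent_def using share_bounds pay_le_price[OF assms] by (intro sum_mono mult_left_mono) auto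
  also have "\<dots> = price i * M * utility i"
    unfolding utility_def sum_distrib_left
    by (intro sum.cong refl) (simp add: share_mult_b1[symmetric] algebra_simps)
  finally show ?thesis .
qed

lemma spent_le_early:
  assumes "1 \<le> i" "i \<le> m div 4"
  shows "spent i \<le> 2 * utility i"
proof -
  have "spent i \<le> price i * (M * utility i)"
    using spent_le_price_utility[of i] assms four_le_card by (simp add: mult.assoc)
  also have "\<dots> \<le> 2 / M * (M * utility i)"
    using price_le_early[OF assms] utility_nonneg[of i] M_pos by (intro mult_right_mono) auto
  finally show ?thesis using M_pos by simp
qed

lemma spent_mult_budget_le:
  assumes "1 \<le> i" "i \<le> m - 3"
  shows "spent i * budget i \<le> 2 * M * utility i"
proof -
  have "spent i * budget i \<le> price i * M * utility i * budget i"
    using spent_le_price_utility[of i] budget_nonneg[of i] assms by (intro mult_right_mono) auto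
  also have "\<dots> = (price i * budget i) * (M * utility i)" by (simp add: algebra_simps)
  also have "\<dots> \<le> 2 * (M * utility i)"
    using price_mult_weighted_budget_le[OF assms, of share] share_bounds utility_nonneg M_pos
    unfolding budget_def by (intro mult_right_mono) auto
  finally show ?thesis by simp
qed

lemma agreement_eq_sum_utility:
  "(\<Sum>r\<in>rankings C. S r * real (agree C r rhd)) = (\<Sum>i = 1..m - 2. utility i) + last_pair_utility"
proof -
  have "(\<Sum>r\<in>rankings C. S r * real (agree C r rhd))
      = (\<Sum>r\<in>rankings C. \<Sum>i = 1..m - 2. S r * real (uX r (chosen i) (remaining i))) + last_pair_utility"
    unfolding last_pair_utility_def
    by (simp add: agree_rhd_eq sum.distrib sum_distrib_left distrib_left)
  also have "(\<Sum>r\<in>rankings C. \<Sum>i = 1..m - 2. S r * real (uX r (chosen i) (remaining i)))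
      = (\<Sum>i = 1..m - 2. utility i)"
    unfolding utility_def by (rule sum.swap)
  finally show ?thesis .
qed

text \<open>Either r gains utility from round m - 2 or from the last pair, or she pays nothing in
  round m - 2 and is on the losing side of the final comparison.\<close>

lemma last_round_share_le:
  assumes r: "r \<in> rankings C"
  shows "share r * b (m - 2) r
    \<le> M * (S r * real (uX r (chosen (m - 2)) (remaining (m - 2)))
            + S r * (if prefers r (rhd ! (m - 2)) (rhd ! (m - 1)) then 1 else 0))
      + (if prefers r (rhd ! (m - 1)) (rhd ! (m - 2)) then b (m - 1) r else 0)"
proof -
  define u where "u = real (uX r (chosen (m - 2)) (remaining (m - 2)))"
  define p where "p = rhd ! (m - 2)"
  define q where "q = rhd ! (m - 1)"
  have i: "1 \<le> m - 2" "m - 2 \<le> m - 2" "m - 2 \<le> m - 1" "Suc (m - 2) = m - 1"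
    using four_le_card by auto
  have pq: "p \<in> C" "q \<in> C" "p \<noteq> q"
    unfolding p_def q_def using rhd_props four_le_card by (auto simp: nth_eq_iff_index_eq)
  have "0 \<le> b (m - 1) r" using b_bounds(1)[OF _ order.refl r] four_le_card by simp
  have "share r * b (m - 2) r
    \<le> M * (S r * u + S r * (if prefers r p q then 1 else 0)) + (if prefers r q p then b (m - 1) r else 0)"
  proof (cases "1 \<le> u \<or> prefers r p q")
    case True
    have "share r * b (m - 2) r \<le> share r * b 1 r"
      using share_bounds[OF r] b_bounds(2)[OF i(1,3) r] by (intro mult_left_mono) auto
    also have "\<dots> = M * (S r * 1)" using share_mult_b1[OF r] by simp
    also have "\<dots> \<le> M * (S r * (u + (if prefers r p q then 1 else 0)))"
      using True S_bounds r M_pos unfolding u_def by (intro mult_left_mono) auto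
    finally show ?thesis using \<open>0 \<le> b (m - 1) r\<close> by (simp add: distrib_left)
  next
    case False
    then have "pay (m - 2) r = 0" using pay_bounds[OF i(1,2) r] unfolding u_def by simp
    then have "b (m - 1) r = b (m - 2) r" using b_Suc[OF i(1,2) r] i(4) by simp
    moreover have "prefers r q p"
      using False prefers_total[of p r q] pq rankingsD[OF r] by auto
    moreover have "share r * b (m - 2) r \<le> b (m - 2) r"
      using share_bounds[OF r] b_bounds(1)[OF i(1,3) r] by (intro mult_left_le_one_le) auto
    moreover have "0 \<le> M * (S r * u + S r * (if prefers r p q then 1 else 0))"
      using S_bounds r M_pos unfolding u_def by simp
    ultimately show ?thesis by simp
  qed
  then show ?thesis unfolding u_def p_def q_def .
qed

lemma last_round_utility:
  "budget (m - 2) - 1 / 2 \<le> M * (utility (m - 2) + last_pair_utility)"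
proof -
  have "budget (m - 2) \<le> (\<Sum>r\<in>rankings C.
      M * (S r * real (uX r (chosen (m - 2)) (remaining (m - 2)))
            + S r * (if prefers r (rhd ! (m - 2)) (rhd ! (m - 1)) then 1 else 0))
      + (if prefers r (rhd ! (m - 1)) (rhd ! (m - 2)) then b (m - 1) r else 0))"
    unfolding budget_def by (rule sum_mono) (rule last_round_share_le)
  also have "\<dots> = M * (utility (m - 2) + last_pair_utility)
      + (\<Sum>r\<in>rankings C. if prefers r (rhd ! (m - 1)) (rhd ! (m - 2)) then b (m - 1) r else 0)"
    unfolding utility_def last_pair_utility_def by (simp add: sum.distrib sum_distrib_left[symmetric])
  finally show ?thesis using last_pair_minority_budget by simp
qed

lemma sum_spent_eq:
  assumes "n \<le> m - 2"
  shows "(\<Sum>i = 1..n. spent i) = budget 1 - budget (Suc n)"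
proof -
  have "(\<Sum>i = 1..n. spent i) = - (\<Sum>i = 1..n. budget (Suc i) - budget i)"
    unfolding sum_negf[symmetric] by (rule sum.cong) (use assms budget_Suc in auto)
  also have "\<dots> = budget 1 - budget (Suc n)" using sum_Suc_diff[of 1 n budget] by simp
  finally show ?thesis .
qed

lemma utility_early_ge:
  "(budget 1 - budget (Suc (m div 4))) / 2 \<le> (\<Sum>i = 1..m div 4. utility i)"
proof -
  have "(\<Sum>i = 1..m div 4. spent i) \<le> (\<Sum>i = 1..m div 4. 2 * utility i)"
    using spent_le_early by (intro sum_mono) auto
  also have "\<dots> = 2 * (\<Sum>i = 1..m div 4. utility i)" by (rule sum_distrib_left[symmetric])
  finally show ?thesis using sum_spent_eq[of "m div 4"] four_le_card by simp
qed

lemma utility_middle_ge: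
  "(budget (Suc (m div 4)) ^ 2 - budget (m - 2) ^ 2) / (4 * M)
     \<le> (\<Sum>i = Suc (m div 4)..m - 3. utility i)"
proof -
  have "Suc (m - 3) = m - 2" "Suc (m div 4) \<le> Suc (m - 3)" using four_le_card by auto
  then have "(budget (Suc (m div 4)) ^ 2 - budget (m - 2) ^ 2) / 2
      \<le> (\<Sum>i = Suc (m div 4)..m - 3. spent i * budget i)"
    using sum_mult_ge_half_diff_squares[of "Suc (m div 4)" "m - 3" budget spent] budget_Suc by simp
  also have "\<dots> \<le> (\<Sum>i = Suc (m div 4)..m - 3. 2 * M * utility i)"
    using spent_mult_budget_le by (intro sum_mono) auto
  finally show ?thesis using M_pos by (simp add: sum_distrib_left field_simps)
qed

lemma utility_last_ge:
  "(budget (m - 2) ^ 2 - 1 / 4) / (4 * M) \<le> utility (m - 2) + last_pair_utility"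
proof (rule square_bound_if_linear_bound[OF M_pos])
  show "0 \<le> utility (m - 2) + last_pair_utility"
    unfolding last_pair_utility_def using S_bounds
    by (intro add_nonneg_nonneg utility_nonneg sum_nonneg) auto
  show "0 \<le> budget (m - 2)" using budget_nonneg four_le_card by simp
  have "total_budget (m - 2) = 3"
    using total_budget_eq[of "m - 2"] four_le_card by (simp add: real_choose_two numeral_3_eq_3 Suc_diff_Suc)
  then show "budget (m - 2) \<le> 3" using budget_le_total_budget[of "m - 2"] four_le_card by simp
qed (rule last_round_utility)

lemma agreement_ge:
  "(budget 1 - budget (Suc (m div 4))) / 2 + (budget (Suc (m div 4)) ^ 2 - 1 / 4) / (4 * M)
     \<le> (\<Sum>r\<in>rankings C. S r * real (agree C r rhd))"
proof -
  have "{1..m - 3} = {1..m div 4} \<union> {Suc (m div 4)..m - 3}" using four_le_card by auto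
  then have "(\<Sum>i = 1..m - 3. utility i)
      = (\<Sum>i = 1..m div 4. utility i) + (\<Sum>i = Suc (m div 4)..m - 3. utility i)"
    by (subst sum.union_disjoint[symmetric]) auto
  moreover have "{1..m - 2} = insert (m - 2) {1..m - 3}" "m - 2 \<notin> {1..m - 3}"
    using four_le_card by auto
  ultimately have "(\<Sum>i = 1..m - 2. utility i)
      = (\<Sum>i = 1..m div 4. utility i) + (\<Sum>i = Suc (m div 4)..m - 3. utility i) + utility (m - 2)"
    by simp
  moreover have "(budget (Suc (m div 4)) ^ 2 - budget (m - 2) ^ 2) / (4 * M)
      + (budget (m - 2) ^ 2 - 1 / 4) / (4 * M) = (budget (Suc (m div 4)) ^ 2 - 1 / 4) / (4 * M)"
    by (simp add: add_divide_distrib[symmetric])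
  ultimately show ?thesis
    using agreement_eq_sum_utility utility_early_ge utility_middle_ge utility_last_ge by linarith
qed

text \<open>Both bounds hold without the case distinction of the theorem, which merely selects the
  stronger one.\<close>

lemma average_agreement_bounds:
  defines "s \<equiv> \<Sum>r\<in>rankings C. S r"
    and "\<xi> \<equiv> real ((m - m div 4) choose 2)"
  assumes s_pos: "0 < s"
  shows "M * s / 4 - 1 / 8 \<le> 1 / s * (\<Sum>r\<in>rankings C. S r * real (agree C r rhd))"
    and "1 / 2 * M * (1 - \<xi> / (M * s)) + (\<xi> + 1) / 4 * (\<xi> / (M * s)) - 1 / (4 * s)
           \<le> 1 / s * (\<Sum>r\<in>rankings C. S r * real (agree C r rhd))"
proof -
  define z where "z = budget (Suc (m div 4))"
  have L: "1 \<le> m div 4" "m div 4 \<le> m - 3" using four_le_card by auto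
  have "s \<le> (\<Sum>r\<in>rankings C. R r)" unfolding s_def using S_bounds by (intro sum_mono) auto
  then have "s \<le> 1" using R_sum by simp
  have "0 \<le> (\<Sum>r\<in>rankings C. S r * real (agree C r rhd))"
    using S_bounds by (intro sum_nonneg) auto
  have "0 \<le> z" unfolding z_def using budget_nonneg L by simp
  have "0 \<le> (\<Sum>i = 1..m div 4. spent i)" using spent_nonneg L by (intro sum_nonneg) auto
  moreover have "(\<Sum>i = 1..m div 4. spent i) = budget 1 - z"
    using sum_spent_eq[of "m div 4"] L unfolding z_def by simp
  ultimately have "z \<le> M * s" using budget_1 unfolding s_def by simp
  have "z \<le> \<xi>"
    using budget_le_total_budget[of "Suc (m div 4)"] total_budget_eq[of "Suc (m div 4)"] L
    unfolding z_def \<xi>_def by simp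
  have "\<xi> + 1 / 4 \<le> M" unfolding \<xi>_def by (rule choose_two_three_quarters_le[OF four_le_card])
  have bound: "(M * s - z) / 2 + (z ^ 2 - 1 / 4) / (4 * M) \<le> (\<Sum>r\<in>rankings C. S r * real (agree C r rhd))"
    using agreement_ge budget_1 unfolding z_def s_def by simp
  show "M * s / 4 - 1 / 8 \<le> 1 / s * (\<Sum>r\<in>rankings C. S r * real (agree C r rhd))"
    using average_bound_small[OF M_pos s_pos \<open>s \<le> 1\<close> _ \<open>0 \<le> z\<close> \<open>z \<le> M * s\<close> bound]
      \<open>0 \<le> (\<Sum>r\<in>rankings C. S r * real (agree C r rhd))\<close> .
  show "1 / 2 * M * (1 - \<xi> / (M * s)) + (\<xi> + 1) / 4 * (\<xi> / (M * s)) - 1 / (4 * s)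
      \<le> 1 / s * (\<Sum>r\<in>rankings C. S r * real (agree C r rhd))"
    by (rule average_bound_large[OF M_pos s_pos \<open>0 \<le> z\<close> \<open>z \<le> \<xi>\<close> \<open>\<xi> + 1 / 4 \<le> M\<close> bound])
qed

end

lemma rmes_coalition_if_outcome:
  assumes "finite C" "4 \<le> card C" "\<forall>r\<in>rankings C. 0 \<le> R r \<and> R r \<le> 1"
    "(\<Sum>r\<in>rankings C. R r) = 1" "rmes_outcome C R rhd" "\<forall>r\<in>rankings C. 0 \<le> S r \<and> S r \<le> R r"
  shows "\<exists>b. rmes_coalition C R rhd b S"
  using assms unfolding rmes_outcome_def rmes_coalition_def rmes_run_def rmes_coalition_axioms_def
  by blast

theorem mainTheorem8:
  fixes C :: "'a set" and R S :: "'a list \<Rightarrow> real" and rhd :: "'a list"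
  assumes finC: "finite C"
    and m4: "card C \<ge> 4"
    and R_range: "\<forall>r\<in>rankings C. 0 \<le> R r \<and> R r \<le> 1"
    and R_sum: "(\<Sum>r\<in>rankings C. R r) = 1"
    and out: "rmes_outcome C R rhd"
    and S_sub: "\<forall>r\<in>rankings C. 0 \<le> S r \<and> S r \<le> R r"
    and S_pos: "(\<Sum>r\<in>rankings C. S r) > 0"
  shows "let m = card C; M = real (m choose 2); s = (\<Sum>r\<in>rankings C. S r);
             \<xi> = real ((m - m div 4) choose 2);
             W = (1 / s) * (\<Sum>r\<in>rankings C. S r * real (agree C r rhd)) in
           (M * s - 1/2 \<le> \<xi> \<longrightarrow> W \<ge> M * s / 4 - 1/8) \<and>
           (M * s - 1/2 > \<xi> \<longrightarrow>
              W \<ge> 1/2 * M * (1 - \<xi> / (M * s)) + (\<xi> + 1) / 4 * (\<xi> / (M * s)) - 1 / (4 * s))"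
proof -
  obtain b where "rmes_coalition C R rhd b S"
    using rmes_coalition_if_outcome[OF finC m4 R_range R_sum out S_sub] by blast
  then interpret rmes_coalition C R rhd b S .
  show ?thesis unfolding Let_def using average_agreement_bounds[OF S_pos] by blast
qed

end
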